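(* Let $A$ and $B$ be disjoint finite alphabets, and let $\rho_A$ and $\rho_B$ be equivalence relations on $A^*$ and $B^*$ respectively, each having infinitely many equivalence classes. Then the language $L(\rho_A,\rho_B)=\{u_1v_1u_2v_2 : (u_1,u_2)\in\rho_A,\ (v_1,v_2)\in\rho_B\}$ (where $u_1,u_2\in A^*$ and $v_1,v_2\in B^*$) is not context-free. *)

theory Defs
  imports Main
begin

text \<open>Context-free grammars. Nonterminals are natural numbers (any finite grammar
  can be renamed to use natural-number nonterminals); terminals are of type 't.\<close>

datatype ('n, 't) sym = NT 'n | Tm 't

type_synonym 't cfg_prods = "(nat \<times> (nat, 't) sym list) set"

definition derive1 :: "'t cfg_prods \<Rightarrow> (nat, 't) sym list \<Rightarrow> (nat, 't) sym list \<Rightarrow> bool" where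
  "derive1 P u v \<longleftrightarrow>
     (\<exists>l r X \<alpha>. (X, \<alpha>) \<in> P \<and> u = l @ [NT X] @ r \<and> v = l @ \<alpha> @ r)"

definition cfg_lang :: "'t cfg_prods \<Rightarrow> nat \<Rightarrow> 't list set" where
  "cfg_lang P S = {w. (derive1 P)\<^sup>*\<^sup>* [NT S] (map Tm w)}"

definition context_free :: "'t list set \<Rightarrow> bool" where
  "context_free L \<longleftrightarrow> (\<exists>P S. finite P \<and> cfg_lang P S = L)"

definition L_rho :: "('a list \<times> 'a list) set \<Rightarrow> ('a list \<times> 'a list) set \<Rightarrow> 'a list set" where
  "L_rho \<rho>A \<rho>B = {u1 @ v1 @ u2 @ v2 | u1 u2 v1 v2. (u1, u2) \<in> \<rho>A \<and> (v1, v2) \<in> \<rho>B}"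

end

theory Submission
  imports Defs "HOL-Library.Sublist"
begin

text \<open>
  Pick \<open>u\<^sub>0 \<in> A\<^sup>*\<close> and \<open>v\<^sub>0 \<in> B\<^sup>*\<close>, longer than the pumping constant, each of minimal length in
  its class; this is possible because only finitely many classes contain a short word.
  Pumping \<open>u\<^sub>0v\<^sub>0u\<^sub>0v\<^sub>0\<close> down deletes a window of length at most \<open>p\<close>, which meets at most two
  adjacent blocks, so the resulting word \<open>u\<^sub>1v\<^sub>1u\<^sub>2v\<^sub>2\<close> still contains one untouched copy of
  \<open>u\<^sub>0\<close> and of \<open>v\<^sub>0\<close> in place. As \<open>u\<^sub>1 \<sim> u\<^sub>2\<close> and \<open>v\<^sub>1 \<sim> v\<^sub>2\<close>, minimality makes all four blocks at
  least as long as before, contradicting that the word got shorter.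
\<close>

section \<open>Parse trees and the pumping lemma\<close>

datatype 't ptree = Leaf 't | Node nat "'t ptree list"

fun root :: "'t ptree \<Rightarrow> (nat, 't) sym" where
  "root (Leaf a) = Tm a"
| "root (Node X ts) = NT X"

fun yield :: "'t ptree \<Rightarrow> 't list" where
  "yield (Leaf a) = [a]"
| "yield (Node X ts) = concat (map yield ts)"

fun parse_tree :: "'t cfg_prods \<Rightarrow> 't ptree \<Rightarrow> bool" where
  "parse_tree P (Leaf a) = True"
| "parse_tree P (Node X ts) = ((X, map root ts) \<in> P \<and> (\<forall>t\<in>set ts. parse_tree P t))"

fun tree_size :: "'t ptree \<Rightarrow> nat" where
  "tree_size (Leaf a) = 1"
| "tree_size (Node X ts) = Suc (sum_list (map tree_size ts))"

fun nonterminals :: "'t ptree \<Rightarrow> nat set" where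
  "nonterminals (Leaf a) = {}"
| "nonterminals (Node X ts) = insert X (\<Union>t\<in>set ts. nonterminals t)"

lemma finite_nonterminals: "finite (nonterminals t)"
  by (induction t) auto

lemma nonterminals_parse_tree: "parse_tree P t \<Longrightarrow> nonterminals t \<subseteq> fst ` P"
  by (induction t) (auto, force)

lemma derives_append:
  assumes "(derive1 P)\<^sup>*\<^sup>* u1 v1" "(derive1 P)\<^sup>*\<^sup>* u2 v2"
  shows "(derive1 P)\<^sup>*\<^sup>* (u1 @ u2) (v1 @ v2)"
proof -
  have step: "derive1 P (x @ u @ y) (x @ v @ y)" if "derive1 P u v" for x u y v
    using that unfolding derive1_def by (metis append.assoc)
  have in_context: "(derive1 P)\<^sup>*\<^sup>* (x @ u @ y) (x @ v @ y)" if "(derive1 P)\<^sup>*\<^sup>* u v" for x u y v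
    using that by (induction rule: rtranclp_induct) (auto intro: rtranclp.rtrancl_into_rtrancl step)
  show ?thesis
    using in_context[OF assms(1), of "[]" u2] in_context[OF assms(2), of v1 "[]"] by simp
qed

lemma derives_concat:
  "(\<And>c. c \<in> set cs \<Longrightarrow> (derive1 P)\<^sup>*\<^sup>* (f c) (g c)) \<Longrightarrow>
    (derive1 P)\<^sup>*\<^sup>* (concat (map f cs)) (concat (map g cs))"
  by (induction cs) (auto intro: derives_append)

lemma parse_tree_derives: "parse_tree P t \<Longrightarrow> (derive1 P)\<^sup>*\<^sup>* [root t] (map Tm (yield t))"
proof (induction t)
  case (Leaf a)
  then show ?case by simp
next
  case (Node X ts)
  have "(derive1 P)\<^sup>*\<^sup>* (concat (map (\<lambda>c. [root c]) ts)) (concat (map (\<lambda>c. map Tm (yield c)) ts))"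
    using Node by (intro derives_concat) auto
  then have "(derive1 P)\<^sup>*\<^sup>* (map root ts) (map Tm (concat (map yield ts)))"
    by (simp add: map_concat comp_def)
  moreover have "derive1 P [NT X] (map root ts)"
    using Node.prems unfolding derive1_def by (metis append_Nil append_Nil2 parse_tree.simps(2))
  ultimately show ?case
    by (simp add: converse_rtranclp_into_rtranclp)
qed

lemma derives_parse_forest:
  "(derive1 P)\<^sup>*\<^sup>* \<alpha> (map Tm w) \<Longrightarrow>
    \<exists>ts. map root ts = \<alpha> \<and> (\<forall>t\<in>set ts. parse_tree P t) \<and> concat (map yield ts) = w"
proof (induction rule: converse_rtranclp_induct)
  case base
  show ?case
    by (rule exI[of _ "map Leaf w"]) (simp add: comp_def)
next
  case (step \<alpha> \<beta>)
  then obtain ts where ts: "map root ts = \<beta>" "\<forall>t\<in>set ts. parse_tree P t" "concat (map yield ts) = w"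
    by blast
  from step(1) obtain l r X \<gamma> where rule: "(X, \<gamma>) \<in> P" "\<alpha> = l @ [NT X] @ r" "\<beta> = l @ \<gamma> @ r"
    unfolding derive1_def by blast
  have "map root ts = l @ \<gamma> @ r"
    unfolding ts(1) by (rule rule(3))
  then obtain ts1 ts23 where "ts = ts1 @ ts23" "l = map root ts1" "\<gamma> @ r = map root ts23"
    using map_eq_append_conv[THEN iffD1] by metis
  moreover obtain ts2 ts3 where "ts23 = ts2 @ ts3" "\<gamma> = map root ts2" "r = map root ts3"
    using calculation(3)[symmetric] map_eq_append_conv[THEN iffD1] by metis
  ultimately show ?case
    using ts rule by (intro exI[of _ "ts1 @ [Node X ts2] @ ts3"]) auto
qed

lemma cfg_lang_iff_parse_tree:
  "w \<in> cfg_lang P S \<longleftrightarrow> (\<exists>t. parse_tree P t \<and> root t = NT S \<and> yield t = w)"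
proof
  assume "w \<in> cfg_lang P S"
  then have "(derive1 P)\<^sup>*\<^sup>* [NT S] (map Tm w)"
    by (simp add: cfg_lang_def)
  then obtain ts where "map root ts = [NT S]" "\<forall>t\<in>set ts. parse_tree P t" "concat (map yield ts) = w"
    using derives_parse_forest by metis
  then show "\<exists>t. parse_tree P t \<and> root t = NT S \<and> yield t = w"
    by (cases ts) auto
next
  assume "\<exists>t. parse_tree P t \<and> root t = NT S \<and> yield t = w"
  then show "w \<in> cfg_lang P S"
    using parse_tree_derives unfolding cfg_lang_def by fastforce
qed

text \<open>\<open>subtree_ctx t s x z\<close>: the tree \<open>t\<close> contains \<open>s\<close> as a subtree, and the leaves of
  \<open>t\<close> to the left and to the right of that occurrence spell \<open>x\<close> and \<open>z\<close>.\<close>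

inductive subtree_ctx :: "'t ptree \<Rightarrow> 't ptree \<Rightarrow> 't list \<Rightarrow> 't list \<Rightarrow> bool" where
  refl: "subtree_ctx t t [] []"
| Node: "subtree_ctx t s x z \<Longrightarrow>
    subtree_ctx (Node X (ts1 @ t # ts2)) s (concat (map yield ts1) @ x) (z @ concat (map yield ts2))"

lemma subtree_ctx_yield: "subtree_ctx t s x z \<Longrightarrow> yield t = x @ yield s @ z"
  by (induction rule: subtree_ctx.induct) auto

lemma subtree_ctx_trans:
  "subtree_ctx t s x z \<Longrightarrow> subtree_ctx s r x' z' \<Longrightarrow> subtree_ctx t r (x @ x') (z' @ z)"
  by (induction rule: subtree_ctx.induct) (auto dest: subtree_ctx.Node)

lemma subtree_ctx_parse_tree: "subtree_ctx t s x z \<Longrightarrow> parse_tree P t \<Longrightarrow> parse_tree P s"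
  by (induction rule: subtree_ctx.induct) auto

lemma subtree_ctx_size: "subtree_ctx t s x z \<Longrightarrow> tree_size s \<le> tree_size t"
  by (induction rule: subtree_ctx.induct) auto

lemma subtree_ctx_child: "c \<in> set ts \<Longrightarrow> \<exists>x z. subtree_ctx (Node X ts) c x z"
  by (metis split_list subtree_ctx.Node subtree_ctx.refl)

lemma size_child_less: "c \<in> set ts \<Longrightarrow> tree_size c < tree_size (Node X ts)"
  by (simp add: less_Suc_eq_le member_le_sum_list)

lemma subtree_ctx_nonterminal:
  "Y \<in> nonterminals t \<Longrightarrow> \<exists>s x z. subtree_ctx t s x z \<and> root s = NT Y"
proof (induction t)
  case (Leaf a)
  then show ?case by simp
next
  case (Node X ts)
  show ?case
  proof (cases "Y = X")
    case True
    then show ?thesis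
      using subtree_ctx.refl by fastforce
  next
    case False
    then obtain c where c: "c \<in> set ts" "Y \<in> nonterminals c"
      using Node.prems by auto
    then show ?thesis
      using Node.IH subtree_ctx_child subtree_ctx_trans by metis
  qed
qed

lemma subtree_ctx_replace:
  assumes "subtree_ctx t s x z" "parse_tree P t" "parse_tree P s'" "root s' = root s"
  shows "\<exists>t'. parse_tree P t' \<and> root t' = root t \<and> yield t' = x @ yield s' @ z
    \<and> tree_size t' + tree_size s = tree_size t + tree_size s'"
  using assms
proof (induction rule: subtree_ctx.induct)
  case (refl t)
  then show ?case
    by (intro exI[of _ s']) auto
next
  case (Node t s x z X ts1 ts2)
  then obtain t' where "parse_tree P t'" "root t' = root t" "yield t' = x @ yield s' @ z"
    "tree_size t' + tree_size s = tree_size t + tree_size s'"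
    by auto
  then show ?case
    using Node.prems by (intro exI[of _ "Node X (ts1 @ t' # ts2)"]) auto
qed

lemma length_yield_Node_le:
  assumes "parse_tree P (Node X ts)" "\<forall>(Y, \<alpha>)\<in>P. length \<alpha> \<le> m"
    and "\<And>c. c \<in> set ts \<Longrightarrow> length (yield c) \<le> k"
  shows "length (yield (Node X ts)) \<le> m * k"
proof -
  have "length (yield (Node X ts)) \<le> length ts * k"
    using sum_list_mono[of ts "\<lambda>c. length (yield c)" "\<lambda>_. k"] assms(3)
    by (simp add: length_concat comp_def sum_list_triv)
  also have "\<dots> \<le> m * k"
    using assms(1,2) by (intro mult_le_mono1) fastforce
  finally show ?thesis .
qed

definition short_repetition :: "nat \<Rightarrow> 't ptree \<Rightarrow> bool" where
  "short_repetition k t \<longleftrightarrow> (\<exists>a x z b x' z'. subtree_ctx t a x z \<and> subtree_ctx a b x' z'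
     \<and> root b = root a \<and> tree_size b < tree_size a \<and> length (yield a) \<le> k)"

lemma short_repetition_subtree:
  "subtree_ctx t s x z \<Longrightarrow> short_repetition k s \<Longrightarrow> short_repetition k t"
  unfolding short_repetition_def by (meson subtree_ctx_trans)

lemma short_repetition_root:
  assumes "c \<in> set ts" "X \<in> nonterminals c" "length (yield (Node X ts)) \<le> k"
  shows "short_repetition k (Node X ts)"
proof -
  obtain s x z where s: "subtree_ctx c s x z" "root s = NT X"
    using subtree_ctx_nonterminal[OF assms(2)] by blast
  obtain x' z' where "subtree_ctx (Node X ts) s x' z'"
    using s(1) subtree_ctx_child[OF assms(1)] subtree_ctx_trans by metis
  moreover have "tree_size s < tree_size (Node X ts)"
    using subtree_ctx_size[OF s(1)] size_child_less[OF assms(1)] by simp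
  ultimately show ?thesis
    unfolding short_repetition_def using s(2) assms(3) subtree_ctx.refl by fastforce
qed

text \<open>A tree in which no branch repeats a nonterminal has at most \<open>m\<^sup>n\<close> leaves, where \<open>m\<close>
  bounds the branching and \<open>n\<close> counts its nonterminals; so a lowest repetition spans at most
  \<open>m\<^sup>n\<^sup>+\<^sup>1\<close> leaves.\<close>

lemma yield_bound_or_short_repetition:
  assumes m: "\<forall>(X, \<alpha>)\<in>P. length \<alpha> \<le> m" "1 \<le> m" and "finite N"
  shows "parse_tree P t \<Longrightarrow> nonterminals t \<subseteq> N \<Longrightarrow>
    length (yield t) \<le> m ^ card (nonterminals t) \<or> short_repetition (m ^ Suc (card N)) t"
proof (induction t)
  case (Leaf a)
  then show ?case by simp
next
  case (Node X ts)
  show ?case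
  proof (cases "\<exists>c\<in>set ts. short_repetition (m ^ Suc (card N)) c")
    case True
    then show ?thesis
      using short_repetition_subtree subtree_ctx_child by metis
  next
    case False
    have children: "length (yield c) \<le> m ^ card (nonterminals c)" if "c \<in> set ts" for c
    proof -
      have "parse_tree P c" "nonterminals c \<subseteq> N"
        using Node.prems that by auto
      then show ?thesis
        using Node.IH[OF that] False that by blast
    qed
    show ?thesis
    proof (cases "\<exists>c\<in>set ts. X \<in> nonterminals c")
      case True
      have "length (yield c) \<le> m ^ card N" if "c \<in> set ts" for c
      proof -
        have "card (nonterminals c) \<le> card N"
          using Node.prems(2) that by (intro card_mono[OF \<open>finite N\<close>]) auto
        with children[OF that] show ?thesis
          using power_increasing[OF _ m(2)] order_trans by blast
      qed
      then have "length (yield (Node X ts)) \<le> m ^ Suc (card N)"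
        using length_yield_Node_le[OF Node.prems(1) m(1)] by simp
      then show ?thesis
        using True short_repetition_root by blast
    next
      case False
      let ?n = "card (nonterminals (Node X ts))"
      have "length (yield c) \<le> m ^ (?n - 1)" if "c \<in> set ts" for c
      proof -
        have "card (nonterminals c) < ?n"
          using False that by (intro psubset_card_mono finite_nonterminals) auto
        then have "card (nonterminals c) \<le> ?n - 1"
          by simp
        with children[OF that] show ?thesis
          using power_increasing[OF _ m(2)] order_trans by blast
      qed
      then have "length (yield (Node X ts)) \<le> m * m ^ (?n - 1)"
        using length_yield_Node_le[OF Node.prems(1) m(1)] by simp
      also have "\<dots> = m ^ ?n"
        using finite_nonterminals[of "Node X ts"] by (simp add: card_gt_0_iff flip: power_Suc)
      finally show ?thesis ..
    qed
  qed
qed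

text \<open>Cutting a repetition out of a parse tree of minimal size must shorten its yield, as it
  gives a smaller tree.\<close>

lemma minimal_parse_tree_pumping:
  assumes "parse_tree P t" and "short_repetition k t"
    and minimal: "\<And>t'. parse_tree P t' \<Longrightarrow> root t' = root t \<Longrightarrow> yield t' = yield t \<Longrightarrow>
      tree_size t \<le> tree_size t'"
  shows "\<exists>x u y v z. yield t = x @ u @ y @ v @ z \<and> u @ v \<noteq> [] \<and> length (u @ y @ v) \<le> k
    \<and> (\<exists>t'. parse_tree P t' \<and> root t' = root t \<and> yield t' = x @ y @ z)"
proof -
  obtain a x z b x' z' where a: "subtree_ctx t a x z" and b: "subtree_ctx a b x' z'"
    "root b = root a" "tree_size b < tree_size a" "length (yield a) \<le> k"
    using assms(2) unfolding short_repetition_def by blast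
  have "parse_tree P b"
    using subtree_ctx_parse_tree subtree_ctx_trans[OF a b(1)] assms(1) by blast
  then obtain t' where t': "parse_tree P t'" "root t' = root t" "yield t' = x @ yield b @ z"
    "tree_size t' < tree_size t"
    using subtree_ctx_replace[OF a assms(1) _ b(2)] b(3) by fastforce
  have yield_t: "yield t = x @ x' @ yield b @ z' @ z"
    using subtree_ctx_yield[OF a] subtree_ctx_yield[OF b(1)] by simp
  have "x' @ z' \<noteq> []"
    using minimal[OF t'(1,2)] t'(3,4) yield_t by fastforce
  moreover have "length (x' @ yield b @ z') \<le> k"
    using b(4) subtree_ctx_yield[OF b(1)] by simp
  ultimately show ?thesis
    using yield_t t' by blast
qed

definition pumpable_down :: "'t list set \<Rightarrow> nat \<Rightarrow> bool" where
  "pumpable_down L p \<longleftrightarrow> (\<forall>w\<in>L. length w > p \<longrightarrow>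
     (\<exists>x u y v z. w = x @ u @ y @ v @ z \<and> u @ v \<noteq> [] \<and> length (u @ y @ v) \<le> p
        \<and> x @ y @ z \<in> L))"

lemma context_free_pumpable_down:
  assumes "context_free L"
  shows "\<exists>p. pumpable_down L p"
proof -
  obtain P S where "finite P" and L: "L = cfg_lang P S"
    using assms unfolding context_free_def by blast
  define m where "m = Max (insert 1 (length ` snd ` P))"
  have m: "\<forall>(X, \<alpha>)\<in>P. length \<alpha> \<le> m" "1 \<le> m"
    unfolding m_def using \<open>finite P\<close> by (auto intro!: Max_ge) force
  define N where "N = fst ` P"
  have "finite N"
    unfolding N_def using \<open>finite P\<close> by simp
  have "pumpable_down (cfg_lang P S) (m ^ Suc (card N))"
    unfolding pumpable_down_def
  proof (intro ballI impI)
    fix w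
    assume w: "w \<in> cfg_lang P S" "length w > m ^ Suc (card N)"
    define is_tree where "is_tree t \<longleftrightarrow> parse_tree P t \<and> root t = NT S \<and> yield t = w" for t
    obtain t0 where "is_tree t0"
      using w(1) cfg_lang_iff_parse_tree unfolding is_tree_def by blast
    then obtain t where t: "is_tree t" and minimal: "\<And>t'. is_tree t' \<Longrightarrow> tree_size t \<le> tree_size t'"
      using ex_has_least_nat[of is_tree t0 tree_size] by blast
    have "parse_tree P t" "nonterminals t \<subseteq> N"
      using t nonterminals_parse_tree unfolding is_tree_def N_def by auto
    moreover have "m ^ card (nonterminals t) \<le> m ^ Suc (card N)"
      using card_mono[OF \<open>finite N\<close> \<open>nonterminals t \<subseteq> N\<close>]
      by (intro power_increasing[OF _ m(2)]) simp
    ultimately have "short_repetition (m ^ Suc (card N)) t"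
      using yield_bound_or_short_repetition[OF m \<open>finite N\<close>] t w(2) unfolding is_tree_def
      by fastforce
    then show "\<exists>x u y v z. w = x @ u @ y @ v @ z \<and> u @ v \<noteq> []
        \<and> length (u @ y @ v) \<le> m ^ Suc (card N) \<and> x @ y @ z \<in> cfg_lang P S"
      using minimal_parse_tree_pumping[OF \<open>parse_tree P t\<close>] minimal t
      unfolding is_tree_def cfg_lang_iff_parse_tree by metis
  qed
  then show ?thesis
    unfolding L by blast
qed

section \<open>Words made of alternating blocks\<close>

lemma hd_notin_if_disjoint: "set Y \<subseteq> B \<Longrightarrow> A \<inter> B = {} \<Longrightarrow> Y = [] \<or> hd Y \<notin> A"
  by (cases Y) auto

lemma hd_append_notin_if_disjoint:
  "Y \<noteq> [] \<Longrightarrow> set Y \<subseteq> B \<Longrightarrow> A \<inter> B = {} \<Longrightarrow> hd (Y @ Z) \<notin> A"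
  by (cases Y) auto

lemma last_append_notin_if_disjoint:
  "Y \<noteq> [] \<Longrightarrow> set Y \<subseteq> B \<Longrightarrow> A \<inter> B = {} \<Longrightarrow> last (Z @ Y) \<notin> A"
  using last_in_set by fastforce

lemma takeWhile_delimited:
  "set X \<subseteq> S \<Longrightarrow> Y = [] \<or> hd Y \<notin> S \<Longrightarrow> takeWhile (\<lambda>c. c \<in> S) (X @ Y) = X"
  by (cases Y) (auto simp: takeWhile_append subset_iff)

lemma delimited_append_eq:
  assumes "X1 @ Y1 = X2 @ Y2" "set X1 \<subseteq> S" "set X2 \<subseteq> S"
    and "Y1 = [] \<or> hd Y1 \<notin> S" "Y2 = [] \<or> hd Y2 \<notin> S"
  shows "X1 = X2 \<and> Y1 = Y2"
  by (metis assms append_eq_append_conv takeWhile_delimited)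

lemma block_factorization_unique:
  assumes AB: "A \<inter> B = {}"
    and eq: "u1 @ v1 @ u2 @ v2 = u1' @ v1' @ u2' @ v2'"
    and A: "set u1 \<subseteq> A" "set u2 \<subseteq> A" "set u1' \<subseteq> A" "set u2' \<subseteq> A"
    and B: "set v1 \<subseteq> B" "set v2 \<subseteq> B" "set v1' \<subseteq> B" "set v2' \<subseteq> B"
    and ne: "v1' \<noteq> []" "u2' \<noteq> []"
  shows "u1 = u1' \<and> v1 = v1' \<and> u2 = u2' \<and> v2 = v2'"
proof -
  have BA: "B \<inter> A = {}"
    using AB by blast
  note hd_v1' = hd_append_notin_if_disjoint[OF ne(1) B(3) AB]
  note hd_u2' = hd_append_notin_if_disjoint[OF ne(2) A(4) BA]
  have "v1 \<noteq> []"
  proof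
    assume "v1 = []"
    then have split: "(u1 @ u2) @ v2 = u1' @ (v1' @ u2' @ v2')"
      using eq by simp
    have "v2 = v1' @ u2' @ v2'"
      using delimited_append_eq[OF split, of A] A(1-3) hd_notin_if_disjoint[OF B(2) AB] hd_v1'
      by simp
    then have "hd u2' \<in> A \<inter> B"
      using hd_in_set[OF ne(2)] A(4) B(2) by auto
    then show False
      using AB by blast
  qed
  then have 1: "u1 = u1' \<and> v1 @ u2 @ v2 = v1' @ u2' @ v2'"
    using delimited_append_eq[OF eq, of A] A(1,3) hd_append_notin_if_disjoint[OF _ B(1) AB] hd_v1'
    by simp
  have "u2 \<noteq> []"
  proof
    assume "u2 = []"
    then have split: "(v1 @ v2) @ [] = v1' @ (u2' @ v2')"
      using 1 by simp
    have "u2' @ v2' = []"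
      using delimited_append_eq[OF split, of B] B(1-3) hd_u2' by simp
    then show False
      using ne(2) by simp
  qed
  then have 2: "v1 = v1' \<and> u2 @ v2 = u2' @ v2'"
    using 1 delimited_append_eq[of v1 "u2 @ v2" v1' "u2' @ v2'" B] B(1,3)
      hd_append_notin_if_disjoint[OF _ A(2) BA] hd_u2' by simp
  then show ?thesis
    using 1 delimited_append_eq[of u2 v2 u2' v2' A] A(2,4)
      hd_notin_if_disjoint[OF B(2) AB] hd_notin_if_disjoint[OF B(4) AB] by simp
qed

lemma prefix_delimited_eq:
  assumes "prefix p (q @ r)" "length q \<le> length p" "set p \<subseteq> S" "r \<noteq> []" "hd r \<notin> S"
  shows "q = p"
proof -
  have "prefix q p"
    using prefix_length_prefix[of q "q @ r" p] assms(1,2) by simp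
  then obtain s where p: "p = q @ s"
    by (auto simp: prefix_def)
  have "s = []"
  proof (rule ccontr)
    assume "s \<noteq> []"
    then have "hd s = hd r"
      using assms(1) p by (auto simp: prefix_def hd_append)
    then show False
      using hd_in_set[OF \<open>s \<noteq> []\<close>] assms(3,5) p by auto
  qed
  then show ?thesis
    using p by simp
qed

lemma suffix_delimited_eq:
  assumes "suffix p (r @ q)" "length q \<le> length p" "set p \<subseteq> S" "r \<noteq> []" "last r \<notin> S"
  shows "q = p"
  using prefix_delimited_eq[of "rev p" "rev q" "rev r" S] assms
  by (simp add: suffix_to_prefix hd_rev)

lemma short_infix_position:
  assumes w: "a @ b @ c @ d = x @ m @ z" and "length m \<le> length b" "length m \<le> length c"
  shows "prefix (a @ b) x \<or> suffix (c @ d) z \<or> prefix a x \<and> suffix d z"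
proof -
  have pre: "prefix q x" if "prefix q (a @ b @ c @ d)" "length q \<le> length x" for q
    using prefix_length_prefix[OF that(1) _ that(2)] w by simp
  have suf: "suffix q z" if "suffix q (a @ b @ c @ d)" "length q \<le> length z" for q
    using suffix_length_suffix[OF that(1) _ that(2)] w by (simp add: suffix_def)
  have len: "length a + length b + length c + length d = length x + length m + length z"
    using arg_cong[OF w, of length] by simp
  consider "length (a @ b) \<le> length x" | "length x < length a"
    | "length a \<le> length x" "length x < length (a @ b)"
    by linarith
  then show ?thesis
  proof cases
    case 1
    then show ?thesis
      using pre by simp
  next
    case 2
    then have "length (c @ d) \<le> length z"
      using len assms(2) by simp
    then show ?thesis
      using suf[of "c @ d"] by (simp add: suffix_def)
  next
    case 3
    then have "length d \<le> length z"
      using len assms(3) by simp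
    then show ?thesis
      using pre[of a] suf[of d] 3(1) by (simp add: suffix_def)
  qed
qed

text \<open>The shortened word is a subsequence of \<open>u\<^sub>0v\<^sub>0u\<^sub>0v\<^sub>0\<close> missing fewer than \<open>|u\<^sub>0|\<close> and
  \<open>|v\<^sub>0|\<close> letters, so its factorization into subsequences of the four blocks has nonempty
  middle parts, which pins it down as the block factorization.\<close>

lemma short_deletion_blocks:
  assumes AB: "A \<inter> B = {}"
    and u0: "set u0 \<subseteq> A" "length u0 > p" and v0: "set v0 \<subseteq> B" "length v0 > p"
    and w: "u0 @ v0 @ u0 @ v0 = x @ u @ y @ v @ z" and short: "length (u @ y @ v) \<le> p"
    and eq: "x @ y @ z = u1 @ v1 @ u2 @ v2"
    and A: "set u1 \<subseteq> A" "set u2 \<subseteq> A" and B: "set v1 \<subseteq> B" "set v2 \<subseteq> B"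
  shows "subseq u1 u0 \<and> subseq v1 v0 \<and> subseq u2 u0 \<and> subseq v2 v0 \<and> v1 \<noteq> [] \<and> u2 \<noteq> []"
proof -
  have "subseq y (u @ y @ v)"
    by (simp add: subseq_drop_many subseq_rev_drop_many)
  then have "subseq (x @ y @ z) (x @ (u @ y @ v) @ z)"
    by (intro list_emb_append_mono) auto
  then have "subseq (x @ y @ z) (u0 @ v0 @ u0 @ v0)"
    using w by simp
  then obtain P1 P2 P3 P4 where P: "x @ y @ z = P1 @ P2 @ P3 @ P4"
    and sub: "subseq P1 u0" "subseq P2 v0" "subseq P3 u0" "subseq P4 v0"
    by (metis subseq_appendE)
  have "length P1 \<le> length u0" "length P2 \<le> length v0" "length P3 \<le> length u0" "length P4 \<le> length v0"
    using sub list_emb_length by blast+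
  moreover have "length P1 + length P2 + length P3 + length P4 + length u + length v
      = 2 * length u0 + 2 * length v0"
    using arg_cong[OF w, of length] arg_cong[OF P, of length] by simp
  ultimately have "P2 \<noteq> []" "P3 \<noteq> []"
    using short u0(2) v0(2) by auto
  moreover have "set P1 \<subseteq> A" "set P2 \<subseteq> B" "set P3 \<subseteq> A" "set P4 \<subseteq> B"
    using sub u0(1) v0(1) by (auto elim!: list_emb_set)
  ultimately have "u1 = P1 \<and> v1 = P2 \<and> u2 = P3 \<and> v2 = P4"
    using block_factorization_unique[OF AB _ A _ _ B] eq P by metis
  then show ?thesis
    using sub \<open>P2 \<noteq> []\<close> \<open>P3 \<noteq> []\<close> by simp
qed

lemma block_at_end_eq:
  assumes AB: "A \<inter> B = {}" and "set u0 \<subseteq> A" "set v0 \<subseteq> B"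
    and "set v1 \<subseteq> B" "set u2 \<subseteq> A" "v1 \<noteq> []" "u2 \<noteq> []"
    and len: "length u1 \<le> length u0" "length v1 \<le> length v0"
      "length u2 \<le> length u0" "length v2 \<le> length v0"
  shows "prefix u0 (u1 @ v1 @ u2 @ v2) \<Longrightarrow> u1 = u0"
    and "prefix (u0 @ v0) (u1 @ v1 @ u2 @ v2) \<Longrightarrow> v1 = v0"
    and "suffix v0 (u1 @ v1 @ u2 @ v2) \<Longrightarrow> v2 = v0"
    and "suffix (u0 @ v0) (u1 @ v1 @ u2 @ v2) \<Longrightarrow> u2 = u0"
proof -
  have BA: "B \<inter> A = {}"
    using AB by blast
  show first_u: "u1 = u0" if "prefix u0 (u1 @ v1 @ u2 @ v2)"
    using prefix_delimited_eq[OF that] assms hd_append_notin_if_disjoint[of v1 B A] by simp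
  show "v1 = v0" if "prefix (u0 @ v0) (u1 @ v1 @ u2 @ v2)"
    using prefix_delimited_eq[of v0 v1 "u2 @ v2" B] that first_u[OF append_prefixD[OF that]]
      assms hd_append_notin_if_disjoint[of u2 A B] BA by simp
  show last_v: "v2 = v0" if "suffix v0 (u1 @ v1 @ u2 @ v2)"
    using suffix_delimited_eq[of v0 "u1 @ v1 @ u2" v2 B] that assms
      last_append_notin_if_disjoint[of u2 A B] BA by simp
  show "u2 = u0" if "suffix (u0 @ v0) (u1 @ v1 @ u2 @ v2)"
  proof -
    have "suffix (u0 @ v0) ((u1 @ v1 @ u2) @ v0)"
      using that last_v[OF suffix_appendD[OF that]] by simp
    then have "suffix u0 ((u1 @ v1) @ u2)"
      using same_suffix_suffix[of u0 v0 "u1 @ v1 @ u2"] by simp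
    then show ?thesis
      using suffix_delimited_eq[of u0 "u1 @ v1" u2 A] assms last_append_notin_if_disjoint[of v1 B A]
      by simp
  qed
qed

lemma deletion_keeps_blocks:
  assumes AB: "A \<inter> B = {}"
    and u0: "set u0 \<subseteq> A" "length u0 > p" and v0: "set v0 \<subseteq> B" "length v0 > p"
    and w: "u0 @ v0 @ u0 @ v0 = x @ u @ y @ v @ z" and short: "length (u @ y @ v) \<le> p"
    and eq: "x @ y @ z = u1 @ v1 @ u2 @ v2"
    and A: "set u1 \<subseteq> A" "set u2 \<subseteq> A" and B: "set v1 \<subseteq> B" "set v2 \<subseteq> B"
  shows "(u1 = u0 \<or> u2 = u0) \<and> (v1 = v0 \<or> v2 = v0)"
proof -
  have "subseq u1 u0" "subseq v1 v0" "subseq u2 u0" "subseq v2 v0" and "v1 \<noteq> []" "u2 \<noteq> []"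
    using short_deletion_blocks[OF assms] by simp_all
  then have "length u1 \<le> length u0" "length v1 \<le> length v0"
    "length u2 \<le> length u0" "length v2 \<le> length v0"
    using list_emb_length by blast+
  note recognise = block_at_end_eq[OF AB u0(1) v0(1) B(1) A(2) \<open>v1 \<noteq> []\<close> \<open>u2 \<noteq> []\<close> this]
  have "prefix x (u1 @ v1 @ u2 @ v2)" "suffix z (u1 @ v1 @ u2 @ v2)"
    using eq[symmetric] by (auto intro: prefixI suffixI)
  moreover have "prefix (u0 @ v0) x \<or> suffix (u0 @ v0) z \<or> prefix u0 x \<and> suffix v0 z"
    using short_infix_position[of u0 v0 u0 v0 x "u @ y @ v" z] w short u0(2) v0(2) by simp
  ultimately show ?thesis
    using recognise append_prefixD suffix_appendD prefix_order.trans suffix_order.trans by metis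
qed

section \<open>Equivalence classes and the language \<open>L(\<rho>\<^sub>A, \<rho>\<^sub>B)\<close>\<close>

lemma long_class_minimum:
  assumes "finite A" and \<rho>: "equiv (lists A) \<rho>" and "infinite (lists A // \<rho>)"
  obtains u0 where "u0 \<in> lists A" "length u0 > p" "\<And>u. (u, u0) \<in> \<rho> \<Longrightarrow> length u0 \<le> length u"
proof -
  define short where "short = {w. set w \<subseteq> A \<and> length w \<le> p}"
  have "finite short"
    unfolding short_def using finite_lists_length_le[OF \<open>finite A\<close>] by simp
  then have "\<not> lists A // \<rho> \<subseteq> (\<lambda>w. \<rho> `` {w}) ` short"
    using assms(3) finite_subset by blast
  then obtain C where C: "C \<in> lists A // \<rho>" "C \<notin> (\<lambda>w. \<rho> `` {w}) ` short"
    by blast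
  then obtain u' where "u' \<in> lists A" "C = \<rho> `` {u'}"
    by (auto simp: quotient_def)
  then have "u' \<in> C"
    using equiv_class_self[OF \<rho>] by simp
  then obtain u0 where u0: "u0 \<in> C" "\<And>u. u \<in> C \<Longrightarrow> length u0 \<le> length u"
    using ex_has_least_nat[of "\<lambda>u. u \<in> C" u' length] by blast
  have "(u', u0) \<in> \<rho>"
    using u0(1) \<open>C = \<rho> `` {u'}\<close> by simp
  then have "u0 \<in> lists A" and C_eq: "C = \<rho> `` {u0}"
    using \<open>C = \<rho> `` {u'}\<close> equiv_class_eq_iff[OF \<rho>, THEN iffD1] by auto
  show thesis
  proof
    show "u0 \<in> lists A" by fact
    show "length u0 > p"
    proof (rule ccontr)
      assume "\<not> length u0 > p"
      then have "u0 \<in> short"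
        using \<open>u0 \<in> lists A\<close> unfolding short_def by auto
      then show False
        using C(2) C_eq by blast
    qed
    show "length u0 \<le> length u" if "(u, u0) \<in> \<rho>" for u
      using u0(2) C_eq that \<rho> by (simp add: equiv_def sym_def)
  qed
qed

lemma L_rho_not_pumpable_down:
  assumes "finite A" and "finite B" and AB: "A \<inter> B = {}"
    and \<rho>A: "equiv (lists A) \<rho>A" and \<rho>B: "equiv (lists B) \<rho>B"
    and "infinite (lists A // \<rho>A)" and "infinite (lists B // \<rho>B)"
  shows "\<not> pumpable_down (L_rho \<rho>A \<rho>B) p"
proof
  assume pump: "pumpable_down (L_rho \<rho>A \<rho>B) p"
  obtain u0 where u0: "u0 \<in> lists A" "length u0 > p"
    and u0_min: "\<And>u. (u, u0) \<in> \<rho>A \<Longrightarrow> length u0 \<le> length u"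
    using long_class_minimum[OF \<open>finite A\<close> \<rho>A \<open>infinite (lists A // \<rho>A)\<close>] by blast
  obtain v0 where v0: "v0 \<in> lists B" "length v0 > p"
    and v0_min: "\<And>v. (v, v0) \<in> \<rho>B \<Longrightarrow> length v0 \<le> length v"
    using long_class_minimum[OF \<open>finite B\<close> \<rho>B \<open>infinite (lists B // \<rho>B)\<close>] by blast
  have "(u0, u0) \<in> \<rho>A" "(v0, v0) \<in> \<rho>B"
    using equiv_class_self[OF \<rho>A u0(1)] equiv_class_self[OF \<rho>B v0(1)] by simp_all
  then have "u0 @ v0 @ u0 @ v0 \<in> L_rho \<rho>A \<rho>B"
    unfolding L_rho_def by blast
  then obtain x u y v z where w: "u0 @ v0 @ u0 @ v0 = x @ u @ y @ v @ z" "u @ v \<noteq> []"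
    "length (u @ y @ v) \<le> p" "x @ y @ z \<in> L_rho \<rho>A \<rho>B"
    using pump u0(2) unfolding pumpable_down_def by fastforce
  then obtain u1 u2 v1 v2 where eq: "x @ y @ z = u1 @ v1 @ u2 @ v2"
    and u12: "(u1, u2) \<in> \<rho>A" and v12: "(v1, v2) \<in> \<rho>B"
    unfolding L_rho_def by blast
  have "set u1 \<subseteq> A" "set u2 \<subseteq> A" "set v1 \<subseteq> B" "set v2 \<subseteq> B"
    using u12 v12 equiv_type[OF \<rho>A] equiv_type[OF \<rho>B] by auto
  moreover have "set u0 \<subseteq> A" "set v0 \<subseteq> B"
    using u0(1) v0(1) by auto
  ultimately have "(u1 = u0 \<or> u2 = u0) \<and> (v1 = v0 \<or> v2 = v0)"
    using deletion_keeps_blocks[OF AB _ u0(2) _ v0(2) w(1,3) eq] by blast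
  moreover have "(u2, u1) \<in> \<rho>A" "(v2, v1) \<in> \<rho>B"
    using u12 v12 \<rho>A \<rho>B by (auto simp: equiv_def sym_def)
  ultimately have "length u0 \<le> length u1" "length u0 \<le> length u2"
    "length v0 \<le> length v1" "length v0 \<le> length v2"
    using u12 v12 u0_min v0_min by auto
  moreover have "length (x @ y @ z) < length (u0 @ v0 @ u0 @ v0)"
    using arg_cong[OF w(1), of length] w(2) by simp
  ultimately show False
    using eq by simp
qed

theorem mainTheorem5:
  fixes A B :: "'a set" and \<rho>A \<rho>B :: "('a list \<times> 'a list) set"
  assumes "finite A" and "finite B" and "A \<inter> B = {}"
    and "equiv (lists A) \<rho>A" and "equiv (lists B) \<rho>B"
    and "infinite (lists A // \<rho>A)" and "infinite (lists B // \<rho>B)"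
  shows "\<not> context_free (L_rho \<rho>A \<rho>B)"
  using context_free_pumpable_down L_rho_not_pumpable_down[OF assms] by blast

end
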